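(* Let $G$ be a graph and $S\subseteq V(G)$. Then $S$ is a minimal zero forcing set of $G$ if and only if $S$ is a maximal ZIr-set of $G$ and $S\cap F\neq\emptyset$ for every fort $F$ of $G$.
   Context: Graphs are simple, finite, undirected, with nonempty vertex set; $N(v)$ is the open neighborhood. Zero forcing: starting from a set of blue vertices, a blue vertex $u$ changes a white vertex $w$ to blue if $w$ is the only white neighbor of $u$; $B$ is a zero forcing set if eventually all vertices are blue; a minimal zero forcing set is one with no proper subset that is a zero forcing set. A nonempty $F\subseteq V(G)$ is a fort if every $v\in V(G)\setminus F$ satisfies $|N(v)\cap F|\ne 1$. For $S\subseteq V(G)$ and $x\in S$, a private fort of $x$ (relative to $S$) is a fort $F$ with $S\cap F=\{x\}$. $S$ is a ZIr-set if every element of $S$ has a private fort relative to $S$; a maximal ZIr-set is a ZIr-set not properly contained in another ZIr-set. *)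

theory Defs
  imports Main
begin

definition graph :: "'a set \<Rightarrow> ('a \<Rightarrow> 'a \<Rightarrow> bool) \<Rightarrow> bool" where
  "graph V E \<longleftrightarrow> finite V \<and> V \<noteq> {} \<and>
     (\<forall>u v. E u v \<longrightarrow> u \<in> V \<and> v \<in> V) \<and>
     (\<forall>u v. E u v \<longrightarrow> E v u) \<and> (\<forall>v. \<not> E v v)"

definition nbhd :: "'a set \<Rightarrow> ('a \<Rightarrow> 'a \<Rightarrow> bool) \<Rightarrow> 'a \<Rightarrow> 'a set" where
  "nbhd V E v = {u \<in> V. E v u}"

text \<open>One application of the color change rule: blue u forces its unique white neighbor w.\<close>
definition force_step :: "'a set \<Rightarrow> ('a \<Rightarrow> 'a \<Rightarrow> bool) \<Rightarrow> 'a set \<Rightarrow> 'a set \<Rightarrow> bool" where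
  "force_step V E B B' \<longleftrightarrow>
     (\<exists>u w. u \<in> B \<and> w \<in> V - B \<and> nbhd V E u - B = {w} \<and> B' = insert w B)"

definition zero_forcing_set :: "'a set \<Rightarrow> ('a \<Rightarrow> 'a \<Rightarrow> bool) \<Rightarrow> 'a set \<Rightarrow> bool" where
  "zero_forcing_set V E B \<longleftrightarrow> B \<subseteq> V \<and> (force_step V E)\<^sup>*\<^sup>* B V"

definition minimal_zero_forcing_set :: "'a set \<Rightarrow> ('a \<Rightarrow> 'a \<Rightarrow> bool) \<Rightarrow> 'a set \<Rightarrow> bool" where
  "minimal_zero_forcing_set V E S \<longleftrightarrow>
     zero_forcing_set V E S \<and> (\<forall>T. T \<subset> S \<longrightarrow> \<not> zero_forcing_set V E T)"

definition fort :: "'a set \<Rightarrow> ('a \<Rightarrow> 'a \<Rightarrow> bool) \<Rightarrow> 'a set \<Rightarrow> bool" where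
  "fort V E F \<longleftrightarrow> F \<noteq> {} \<and> F \<subseteq> V \<and>
     (\<forall>v \<in> V - F. card (nbhd V E v \<inter> F) \<noteq> 1)"

definition private_fort :: "'a set \<Rightarrow> ('a \<Rightarrow> 'a \<Rightarrow> bool) \<Rightarrow> 'a set \<Rightarrow> 'a \<Rightarrow> 'a set \<Rightarrow> bool" where
  "private_fort V E S x F \<longleftrightarrow> fort V E F \<and> S \<inter> F = {x}"

definition ZIr_set :: "'a set \<Rightarrow> ('a \<Rightarrow> 'a \<Rightarrow> bool) \<Rightarrow> 'a set \<Rightarrow> bool" where
  "ZIr_set V E S \<longleftrightarrow> S \<subseteq> V \<and> (\<forall>x \<in> S. \<exists>F. private_fort V E S x F)"

definition maximal_ZIr_set :: "'a set \<Rightarrow> ('a \<Rightarrow> 'a \<Rightarrow> bool) \<Rightarrow> 'a set \<Rightarrow> bool" where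
  "maximal_ZIr_set V E S \<longleftrightarrow>
     ZIr_set V E S \<and> (\<forall>T. S \<subset> T \<longrightarrow> \<not> ZIr_set V E T)"

end

theory Submission
  imports Defs
begin

text \<open>A vertex set is zero forcing iff it meets every fort: a blue set disjoint from a fort F
  can never force a vertex of F, as the forcing vertex would have exactly one neighbour in F; and
  once forcing stalls, the white vertices form a fort. Hence S is a minimal zero forcing set iff it
  meets every fort while each S - {x} misses one, i.e. every x \<in> S has a private fort. Maximality
  among ZIr-sets is then automatic: a private fort of a vertex added to S would miss S.\<close>

lemma force_step_subset: "force_step V E B B' \<Longrightarrow> B \<subseteq> V \<Longrightarrow> B' \<subseteq> V"
  unfolding force_step_def by blast

lemma force_steps_subset: "(force_step V E)\<^sup>*\<^sup>* B C \<Longrightarrow> B \<subseteq> V \<Longrightarrow> C \<subseteq> V"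
  by (induction rule: rtranclp_induct) (auto dest: force_step_subset)

lemma force_steps_mono: "(force_step V E)\<^sup>*\<^sup>* B C \<Longrightarrow> B \<subseteq> C"
  by (induction rule: rtranclp_induct) (auto simp: force_step_def)

lemma force_step_disjoint_fort:
  assumes step: "force_step V E B B'" and disj: "B \<inter> F = {}"
    and F: "fort V E F" and BV: "B \<subseteq> V"
  shows "B' \<inter> F = {}"
proof (rule ccontr)
  obtain u w where u: "u \<in> B" "nbhd V E u - B = {w}" "B' = insert w B"
    using step unfolding force_step_def by blast
  assume "B' \<inter> F \<noteq> {}"
  with u disj have "nbhd V E u \<inter> F = {w}" by blast
  then have "card (nbhd V E u \<inter> F) = 1" by simp
  moreover have "u \<in> V - F" using u BV disj by blast
  ultimately show False using F unfolding fort_def by blast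
qed

lemma force_steps_disjoint_fort:
  assumes "(force_step V E)\<^sup>*\<^sup>* B C" "B \<inter> F = {}" "fort V E F" "B \<subseteq> V"
  shows "C \<inter> F = {}"
  using assms(1)
proof (induction rule: rtranclp_induct)
  case (step C C')
  then show ?case
    using force_step_disjoint_fort force_steps_subset assms(2-4) by metis
qed (use assms in simp)

lemma zero_forcing_set_meets_fort:
  assumes "zero_forcing_set V E B" "fort V E F"
  shows "B \<inter> F \<noteq> {}"
proof
  assume "B \<inter> F = {}"
  with assms have "V \<inter> F = {}"
    using force_steps_disjoint_fort unfolding zero_forcing_set_def by blast
  then show False using assms(2) unfolding fort_def by blast
qed

lemma stalled_complement_fort:
  assumes CV: "C \<subseteq> V" "C \<noteq> V" and stalled: "\<And>C'. \<not> force_step V E C C'"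
  shows "fort V E (V - C)"
  unfolding fort_def
proof (intro conjI ballI)
  show "V - C \<noteq> {}" "V - C \<subseteq> V" using CV by blast+
  fix v assume v: "v \<in> V - (V - C)"
  show "card (nbhd V E v \<inter> (V - C)) \<noteq> 1"
  proof
    assume "card (nbhd V E v \<inter> (V - C)) = 1"
    then obtain w where "nbhd V E v \<inter> (V - C) = {w}" by (auto simp: card_Suc_eq)
    moreover have "nbhd V E v - C = nbhd V E v \<inter> (V - C)" unfolding nbhd_def by blast
    ultimately have "force_step V E C (insert w C)"
      unfolding force_step_def using v by blast
    then show False using stalled by blast
  qed
qed

lemma meets_all_forts_imp_zero_forcing_set:
  assumes fin: "finite V" and BV: "B \<subseteq> V" and meets: "\<And>F. fort V E F \<Longrightarrow> B \<inter> F \<noteq> {}"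
  shows "zero_forcing_set V E B"
proof -
  let ?reach = "(force_step V E)\<^sup>*\<^sup>* B"
  have "\<forall>C. ?reach C \<longrightarrow> card C < Suc (card V)"
    using force_steps_subset[OF _ BV] card_mono[OF fin] by (simp add: le_imp_less_Suc)
  then obtain C where C: "?reach C" and greatest: "\<And>C'. ?reach C' \<Longrightarrow> card C' \<le> card C"
    using Lattices_Big.ex_has_greatest_nat[of ?reach B card] by blast
  have CV: "C \<subseteq> V" using force_steps_subset[OF C BV] .
  have stalled: "\<not> force_step V E C C'" for C'
  proof
    assume step: "force_step V E C C'"
    then obtain w where "w \<in> V - C" "C' = insert w C" unfolding force_step_def by blast
    then have "card C' = Suc (card C)" using CV fin by (simp add: finite_subset)
    moreover have "card C' \<le> card C" using greatest C step by (meson rtranclp.rtrancl_into_rtrancl)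
    ultimately show False by simp
  qed
  have "C = V"
  proof (rule ccontr)
    assume "C \<noteq> V"
    then have "B \<inter> (V - C) \<noteq> {}" using meets stalled_complement_fort CV stalled by blast
    then show False using force_steps_mono[OF C] by blast
  qed
  then show ?thesis using C BV unfolding zero_forcing_set_def by simp
qed

lemma zero_forcing_set_iff_meets_all_forts:
  assumes "finite V" "B \<subseteq> V"
  shows "zero_forcing_set V E B \<longleftrightarrow> (\<forall>F. fort V E F \<longrightarrow> B \<inter> F \<noteq> {})"
  using meets_all_forts_imp_zero_forcing_set[OF assms] zero_forcing_set_meets_fort by blast

lemma private_fort_disjoint:
  "private_fort V E S x F \<Longrightarrow> T \<subseteq> S - {x} \<Longrightarrow> T \<inter> F = {}"
  unfolding private_fort_def by blast

lemma ZIr_set_maximal_if_meets_all_forts: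
  assumes "ZIr_set V E S" and meets: "\<forall>F. fort V E F \<longrightarrow> S \<inter> F \<noteq> {}"
  shows "maximal_ZIr_set V E S"
  unfolding maximal_ZIr_set_def
proof (intro conjI allI impI notI)
  fix T assume "S \<subset> T" "ZIr_set V E T"
  then obtain y F where "y \<in> T - S" and F: "private_fort V E T y F"
    unfolding ZIr_set_def by blast
  then have "S \<inter> F = {}"
    by (intro private_fort_disjoint[OF F]) (use \<open>S \<subset> T\<close> in blast)
  then show False using meets F unfolding private_fort_def by blast
qed (fact assms(1))

lemma minimal_zero_forcing_set_iff_ZIr_set_meets_all_forts:
  assumes fin: "finite V" and SV: "S \<subseteq> V"
  shows "minimal_zero_forcing_set V E S \<longleftrightarrow>
           ZIr_set V E S \<and> (\<forall>F. fort V E F \<longrightarrow> S \<inter> F \<noteq> {})"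
proof
  assume min: "minimal_zero_forcing_set V E S"
  then have meets: "\<forall>F. fort V E F \<longrightarrow> S \<inter> F \<noteq> {}"
    using zero_forcing_set_meets_fort[of V E S] unfolding minimal_zero_forcing_set_def by blast
  have "\<exists>F. private_fort V E S x F" if "x \<in> S" for x
  proof -
    have "\<not> zero_forcing_set V E (S - {x})"
      using min that unfolding minimal_zero_forcing_set_def by blast
    then obtain F where "fort V E F" "(S - {x}) \<inter> F = {}"
      using zero_forcing_set_iff_meets_all_forts[OF fin, of "S - {x}" E] SV by blast
    with meets that show ?thesis unfolding private_fort_def by blast
  qed
  with SV meets show "ZIr_set V E S \<and> (\<forall>F. fort V E F \<longrightarrow> S \<inter> F \<noteq> {})"
    unfolding ZIr_set_def by blast
next
  assume ZIr_meets: "ZIr_set V E S \<and> (\<forall>F. fort V E F \<longrightarrow> S \<inter> F \<noteq> {})"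
  have "\<not> zero_forcing_set V E T" if "T \<subset> S" for T
  proof
    assume "zero_forcing_set V E T"
    obtain x F where "x \<in> S - T" and F: "private_fort V E S x F"
      using \<open>T \<subset> S\<close> ZIr_meets unfolding ZIr_set_def by blast
    then have "T \<inter> F = {}"
      by (intro private_fort_disjoint[OF F]) (use \<open>T \<subset> S\<close> in blast)
    then show False
      using zero_forcing_set_meets_fort \<open>zero_forcing_set V E T\<close> F
      unfolding private_fort_def by blast
  qed
  moreover have "zero_forcing_set V E S"
    using meets_all_forts_imp_zero_forcing_set fin SV ZIr_meets by blast
  ultimately show "minimal_zero_forcing_set V E S"
    unfolding minimal_zero_forcing_set_def by blast
qed

theorem proposition2p2:
  fixes V :: "'a set" and E :: "'a \<Rightarrow> 'a \<Rightarrow> bool" and S :: "'a set"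
  assumes "graph V E" and "S \<subseteq> V"
  shows "minimal_zero_forcing_set V E S \<longleftrightarrow>
           (maximal_ZIr_set V E S \<and> (\<forall>F. fort V E F \<longrightarrow> S \<inter> F \<noteq> {}))"
proof -
  have "finite V" using assms(1) unfolding graph_def by blast
  then show ?thesis
    using minimal_zero_forcing_set_iff_ZIr_set_meets_all_forts[OF _ assms(2)]
      ZIr_set_maximal_if_meets_all_forts
    unfolding maximal_ZIr_set_def by blast
qed

end
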